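(* Let $\mathbf x\in\mathcal D^m$ have finite quadratic variation along $\pi$, i.e. $\mathbf q_n(t)=\sum_{i:\,t^n_i\le t}(\mathbf{x}(t^n_{i+1})-\mathbf{x}(t^n_i))(\mathbf{x}(t^n_{i+1})-\mathbf{x}(t^n_i))^T$ converges in $(\mathcal D^{m\times m},d)$ to a limit $[\mathbf x]_\pi$. Then: (i) $\mathbf q_n\to[\mathbf x]_\pi$ locally uniformly on $[0,\infty)$ if and only if $\mathbf x$ is continuous; (ii) $F(\mathbf q_n)\to F([\mathbf x]_\pi)$ for every functional $F$ on $\mathcal D^{m\times m}$ which is $J_1$-continuous at $[\mathbf x]_\pi$.
   Context: Let $\pi=(\pi_n)_{n\ge1}$ be a sequence of partitions $\pi_n=(t^n_0,\dots,t^n_{k_n})$ with $0=t^n_0<\dots<t^n_{k_n}<\infty$, $t^n_{k_n}\uparrow\infty$, and mesh tending to $0$ on compacts; sums over $i$ run over $0\le i<k_n$. $\mathcal D^m$, $\mathcal D^{m\times m}$ denote the spaces of càdlàg functions $[0,\infty)\to\mathbb R^m$, resp. $\mathbb R^{m\times m}$, each with a metric $d$ inducing the Skorokhod $J_1$ topology. *)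

theory Defs
  imports "HOL-Analysis.Analysis"
begin

text \<open>Functions on the time axis are modelled as total functions on real;
only their values on [0,\<infinity>) matter.\<close>

definition cadlag :: "(real \<Rightarrow> 'a::metric_space) \<Rightarrow> bool" where
  "cadlag f \<longleftrightarrow> (\<forall>t\<ge>0. continuous (at_right t) f) \<and>
                 (\<forall>t>0. \<exists>l. (f \<longlongrightarrow> l) (at_left t))"

definition time_change :: "(real \<Rightarrow> real) \<Rightarrow> bool" where
  "time_change l \<longleftrightarrow> continuous_on {0..} l \<and> strict_mono_on {0..} l \<and>
                      bij_betw l {0..} {0..}"

text \<open>Convergence of a sequence in the Skorokhod J1 topology on D[0,\<infinity>)
  (Jacod--Shiryaev, Thm. VI.1.14).\<close>
definition J1_conv :: "(nat \<Rightarrow> real \<Rightarrow> 'a::metric_space) \<Rightarrow> (real \<Rightarrow> 'a) \<Rightarrow> bool" where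
  "J1_conv ys y \<longleftrightarrow> (\<exists>l::nat \<Rightarrow> real \<Rightarrow> real.
      (\<forall>n. time_change (l n)) \<and>
      uniform_limit {0..} l (\<lambda>t. t) sequentially \<and>
      (\<forall>T\<ge>0. uniform_limit {0..T} (\<lambda>n t. ys n (l n t)) y sequentially))"

text \<open>Open sets of the J1 topology on the Skorokhod space (this topology is
  metrizable, hence determined by its convergent sequences).\<close>
definition J1_open :: "(real \<Rightarrow> 'a::metric_space) set \<Rightarrow> bool" where
  "J1_open U \<longleftrightarrow> U \<subseteq> {f. cadlag f} \<and>
     (\<forall>y\<in>U. \<forall>ys. (\<forall>n. cadlag (ys n)) \<and> J1_conv ys y \<longrightarrow> (\<forall>\<^sub>F n in sequentially. ys n \<in> U))"

definition J1_continuous_at :: "((real \<Rightarrow> 'a::metric_space) \<Rightarrow> real) \<Rightarrow> (real \<Rightarrow> 'a) \<Rightarrow> bool" where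
  "J1_continuous_at F y \<longleftrightarrow>
     (\<forall>e>0. \<exists>U. J1_open U \<and> y \<in> U \<and> (\<forall>z\<in>U. \<bar>F z - F y\<bar> < e))"

definition mesh_on :: "(nat \<Rightarrow> real) \<Rightarrow> nat \<Rightarrow> real \<Rightarrow> real" where
  "mesh_on p k T = Max ({p (Suc i) - p i | i. i < k \<and> p i \<le> T} \<union> {0})"

definition partition_seq :: "(nat \<Rightarrow> nat \<Rightarrow> real) \<Rightarrow> (nat \<Rightarrow> nat) \<Rightarrow> bool" where
  "partition_seq t k \<longleftrightarrow>
     (\<forall>n. t n 0 = 0) \<and>
     (\<forall>n i. i < k n \<longrightarrow> t n i < t n (Suc i)) \<and>
     incseq (\<lambda>n. t n (k n)) \<and> filterlim (\<lambda>n. t n (k n)) at_top sequentially \<and>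
     (\<forall>T>0. (\<lambda>n. mesh_on (t n) (k n) T) \<longlonglongrightarrow> 0)"

definition outer :: "real^'m \<Rightarrow> real^'m \<Rightarrow> real^'m^'m" where
  "outer v w = (\<chi> i j. v$i * w$j)"

definition qv_n :: "(nat \<Rightarrow> nat \<Rightarrow> real) \<Rightarrow> (nat \<Rightarrow> nat) \<Rightarrow> (real \<Rightarrow> real^'m) \<Rightarrow> nat \<Rightarrow> real \<Rightarrow> real^'m^'m" where
  "qv_n t k x n s = (\<Sum>i\<in>{i. i < k n \<and> t n i \<le> s}.
       outer (x (t n (Suc i)) - x (t n i)) (x (t n (Suc i)) - x (t n i)))"

end

theory Submission
  imports Defs
begin

text \<open>Both directions of (i) compare jumps. If q_n converges to [x] locally uniformly and x jumps
  at s > 0, look at the last partition point before s: there q_n jumps by the square of an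
  increment of x across s, which tends to |x(s) - x(s-)|^2, whereas uniform convergence sends the
  values of q_n at that point and at its predecessor to the same limit [x](s-). Conversely, for
  continuous x all jumps of q_n on compacts are uniformly small, hence so are those of the J1
  limit (the time changes merely move jumps around), and J1 convergence to a continuous limit is
  locally uniform. Part (ii) is the sequential description of J1-open sets.\<close>

lemma uniform_limit_tendsto_compose:
  fixes f :: "'i \<Rightarrow> 'a \<Rightarrow> 'b::metric_space"
  assumes "uniform_limit S f g F" "\<forall>\<^sub>F n in F. a n \<in> S" "((\<lambda>n. g (a n)) \<longlongrightarrow> L) F"
  shows "((\<lambda>n. f n (a n)) \<longlongrightarrow> L) F"
proof (rule tendstoI)
  fix e :: real assume "e > 0"
  have "\<forall>\<^sub>F n in F. \<forall>x\<in>S. dist (f n x) (g x) < e/2"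
    using uniform_limitD[OF assms(1) half_gt_zero[OF \<open>e > 0\<close>]] .
  moreover have "\<forall>\<^sub>F n in F. dist (g (a n)) L < e/2"
    using tendstoD[OF assms(3) half_gt_zero[OF \<open>e > 0\<close>]] .
  ultimately have "\<forall>\<^sub>F n in F. dist (f n (a n)) (g (a n)) < e/2 \<and> dist (g (a n)) L < e/2"
    using assms(2) by eventually_elim blast
  then show "\<forall>\<^sub>F n in F. dist (f n (a n)) L < e"
    by eventually_elim (metis dist_triangle_half_r dist_commute)
qed

lemma tendsto_at_left_sum_le:
  fixes p :: "'i \<Rightarrow> real" and f :: "'i \<Rightarrow> 'a::real_normed_vector"
  assumes "finite I"
  shows "((\<lambda>y. \<Sum>i\<in>{i\<in>I. p i \<le> y}. f i) \<longlongrightarrow> (\<Sum>i\<in>{i\<in>I. p i < s}. f i)) (at_left s)"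
proof -
  have "\<forall>\<^sub>F y in at_left s. p i \<le> y \<longleftrightarrow> p i < s" for i
  proof (cases "p i < s")
    case True
    then show ?thesis by (auto simp: eventually_at_left[OF True] intro: exI[of _ "p i"])
  qed (auto simp: eventually_at_filter)
  then have "\<forall>\<^sub>F y in at_left s. \<forall>i\<in>I. p i \<le> y \<longleftrightarrow> p i < s"
    using assms by (simp add: eventually_ball_finite)
  then have "\<forall>\<^sub>F y in at_left s. (\<Sum>i\<in>{i\<in>I. p i < s}. f i) = (\<Sum>i\<in>{i\<in>I. p i \<le> y}. f i)"
    by (rule eventually_mono) (metis (no_types, lifting))
  then show ?thesis by (rule Lim_transform_eventually[OF tendsto_const])
qed

lemma continuous_at_right_sum_le:
  fixes p :: "'i \<Rightarrow> real" and f :: "'i \<Rightarrow> 'a::real_normed_vector"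
  assumes "finite I"
  shows "continuous (at_right s) (\<lambda>y. \<Sum>i\<in>{i\<in>I. p i \<le> y}. f i)"
proof -
  have "\<forall>\<^sub>F y in at_right s. p i \<le> y \<longleftrightarrow> p i \<le> s" for i
  proof (cases "p i \<le> s")
    case False
    then have "s < p i" by simp
    then show ?thesis using False by (auto simp: eventually_at_right[OF \<open>s < p i\<close>] intro: exI[of _ "p i"])
  qed (auto simp: eventually_at_filter)
  then have "\<forall>\<^sub>F y in at_right s. \<forall>i\<in>I. p i \<le> y \<longleftrightarrow> p i \<le> s"
    using assms by (simp add: eventually_ball_finite)
  then have "\<forall>\<^sub>F y in at_right s. (\<Sum>i\<in>{i\<in>I. p i \<le> s}. f i) = (\<Sum>i\<in>{i\<in>I. p i \<le> y}. f i)"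
    by (rule eventually_mono) (metis (no_types, lifting))
  then show ?thesis
    unfolding continuous_within by (rule Lim_transform_eventually[OF tendsto_const])
qed

lemma cadlag_sum_le:
  fixes p :: "'i \<Rightarrow> real" and f :: "'i \<Rightarrow> 'a::real_normed_vector"
  assumes "finite I"
  shows "cadlag (\<lambda>y. \<Sum>i\<in>{i\<in>I. p i \<le> y}. f i)"
  using continuous_at_right_sum_le[OF assms] tendsto_at_left_sum_le[OF assms]
  unfolding cadlag_def by blast

lemma cadlag_left_continuous_imp_continuous_on:
  assumes "cadlag f" "\<And>s. s > 0 \<Longrightarrow> continuous (at_left s) f"
  shows "continuous_on {0..} f"
  unfolding continuous_on_eq_continuous_within
proof
  fix s :: real assume "s \<in> {0..}"
  then have "continuous (at_right s) f" using assms(1) unfolding cadlag_def by simp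
  moreover have "continuous (at_left s) f" if "s \<noteq> 0" using that \<open>s \<in> {0..}\<close> assms(2) by simp
  ultimately show "continuous (at s within {0..}) f"
    by (cases "s = 0") (auto simp: at_within_Ici_at_right continuous_at_split
        intro: continuous_at_imp_continuous_within)
qed

lemma J1_conv_tendsto_functional:
  assumes "\<forall>n. cadlag (ys n)" "J1_conv ys y" "J1_continuous_at F y"
  shows "(\<lambda>n. F (ys n)) \<longlonglongrightarrow> F y"
proof (rule tendstoI)
  fix e :: real assume "e > 0"
  then obtain U where U: "J1_open U" "y \<in> U" "\<forall>z\<in>U. \<bar>F z - F y\<bar> < e"
    using assms(3) unfolding J1_continuous_at_def by blast
  have "\<forall>\<^sub>F n in sequentially. ys n \<in> U"
    using U(1,2) assms(1,2) unfolding J1_open_def by blast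
  then show "\<forall>\<^sub>F n in sequentially. dist (F (ys n)) (F y) < e"
    by eventually_elim (use U(3) in \<open>simp add: dist_real_def\<close>)
qed

lemma time_change_surj: "time_change l \<Longrightarrow> s \<ge> 0 \<Longrightarrow> \<exists>u\<ge>0. l u = s"
  unfolding time_change_def bij_betw_def by (metis atLeast_iff imageE)

lemma J1_conv_continuous_imp_uniform_limit:
  fixes y :: "real \<Rightarrow> 'a::metric_space"
  assumes J: "J1_conv ys y" and cont: "continuous_on {0..} y" and "T \<ge> 0"
  shows "uniform_limit {0..T} ys y sequentially"
proof (rule uniform_limitI)
  fix e :: real assume "e > 0"
  obtain l where l: "\<forall>n. time_change (l n)" "uniform_limit {0..} l (\<lambda>t. t) sequentially"
    and U: "uniform_limit {0..T+1} (\<lambda>n u. ys n (l n u)) y sequentially"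
    using J \<open>T \<ge> 0\<close> unfolding J1_conv_def by force
  have "uniformly_continuous_on {0..T+1} y"
    by (rule compact_uniformly_continuous[OF continuous_on_subset[OF cont]]) auto
  then obtain d where "d > 0"
    and d: "\<And>u v. u \<in> {0..T+1} \<Longrightarrow> v \<in> {0..T+1} \<Longrightarrow> dist v u < d \<Longrightarrow> dist (y v) (y u) < e/2"
    unfolding uniformly_continuous_on_def using \<open>e > 0\<close> by (metis half_gt_zero)
  have "\<forall>\<^sub>F n in sequentially. \<forall>w\<in>{0..T+1}. dist (ys n (l n w)) (y w) < e/2"
    using uniform_limitD[OF U half_gt_zero[OF \<open>e > 0\<close>]] .
  moreover have "\<forall>\<^sub>F n in sequentially. \<forall>w\<in>{0..}. dist (l n w) w < min d 1"
    using uniform_limitD[OF l(2), of "min d 1"] \<open>d > 0\<close> by simp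
  ultimately show "\<forall>\<^sub>F n in sequentially. \<forall>u\<in>{0..T}. dist (ys n u) (y u) < e"
  proof eventually_elim
    case (elim n)
    show ?case
    proof
      fix u assume u: "u \<in> {0..T}"
      then obtain w where w: "w \<ge> 0" "l n w = u" using time_change_surj l(1) by force
      then have "dist w u < min d 1" using elim(2) by (metis atLeast_iff dist_commute)
      then have "w \<in> {0..T+1}" using w u by (auto simp: dist_real_def)
      then have "dist (ys n u) (y w) < e/2" "dist (y w) (y u) < e/2"
        using elim(1) w(2) d u \<open>dist w u < min d 1\<close> by auto
      then show "dist (ys n u) (y u) < e" by (metis dist_triangle_half_r dist_commute)
    qed
  qed
qed

lemma time_change_pos: "time_change l \<Longrightarrow> s > 0 \<Longrightarrow> l s > 0"
  unfolding time_change_def strict_mono_on_def bij_betw_def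
  by (metis atLeast_iff image_eqI less_eq_real_def less_le_not_le order.strict_trans2)

lemma time_change_filterlim_at_left:
  assumes "time_change l" "s > 0"
  shows "filterlim l (at_left (l s)) (at_left s)"
proof -
  have "isCont l s"
    using assms continuous_on_interior[of "{0..}" l s] unfolding time_change_def by simp
  then have "(l \<longlongrightarrow> l s) (at_left s)"
    by (simp add: isCont_def filterlim_at_split)
  moreover have "\<forall>\<^sub>F v in at_left s. l v < l s"
    using assms(1) \<open>s > 0\<close> unfolding time_change_def strict_mono_on_def eventually_at_left[OF \<open>s > 0\<close>]
    by (intro exI[of _ 0]) auto
  ultimately show ?thesis
    unfolding filterlim_at by (auto elim: eventually_mono)
qed

lemma J1_conv_jump_le:
  fixes y :: "real \<Rightarrow> 'a::metric_space"
  assumes J: "J1_conv ys y" and cadlag_ys: "\<forall>n. cadlag (ys n)" and "s > 0" "r > 0"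
    and yL: "(y \<longlongrightarrow> yL) (at_left s)"
    and jumps: "\<forall>\<^sub>F n in sequentially.
                  \<forall>u\<in>{0<..s+1}. \<forall>L. (ys n \<longlongrightarrow> L) (at_left u) \<longrightarrow> dist L (ys n u) < r"
  shows "dist yL (y s) \<le> 3 * r"
proof -
  obtain l where l: "\<forall>n. time_change (l n)" "uniform_limit {0..} l (\<lambda>t. t) sequentially"
    and U: "uniform_limit {0..s} (\<lambda>n u. ys n (l n u)) y sequentially"
    using J \<open>s > 0\<close> unfolding J1_conv_def by force
  have "\<forall>\<^sub>F n in sequentially. (\<forall>u\<in>{0..s}. dist (ys n (l n u)) (y u) < r)
      \<and> (\<forall>u\<in>{0..}. dist (l n u) u < 1)
      \<and> (\<forall>u\<in>{0<..s+1}. \<forall>L. (ys n \<longlongrightarrow> L) (at_left u) \<longrightarrow> dist L (ys n u) < r)"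
    using uniform_limitD[OF U \<open>r > 0\<close>] uniform_limitD[OF l(2), of 1] jumps
    by (simp add: eventually_conj)
  then obtain n where close: "\<forall>u\<in>{0..s}. dist (ys n (l n u)) (y u) < r"
    and near_id: "\<forall>u\<in>{0..}. dist (l n u) u < 1"
    and small_jumps: "\<forall>u\<in>{0<..s+1}. \<forall>L. (ys n \<longlongrightarrow> L) (at_left u) \<longrightarrow> dist L (ys n u) < r"
    using eventually_happens'[OF sequentially_bot] by blast
  have "0 < l n s" using time_change_pos l(1) \<open>s > 0\<close> by blast
  moreover have "l n s < s + 1" using near_id[rule_format, of s] \<open>s > 0\<close> by (simp add: dist_real_def)
  ultimately have u: "l n s \<in> {0<..s+1}" by simp
  then obtain L where L: "(ys n \<longlongrightarrow> L) (at_left (l n s))"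
    using cadlag_ys unfolding cadlag_def by force
  have "((\<lambda>v. ys n (l n v)) \<longlongrightarrow> L) (at_left s)"
    using filterlim_compose[OF L time_change_filterlim_at_left[OF spec[OF l(1), of n] \<open>s > 0\<close>]] .
  moreover have "\<forall>\<^sub>F v in at_left s. dist (y v) (ys n (l n v)) \<le> r"
    using close \<open>s > 0\<close> unfolding eventually_at_left[OF \<open>s > 0\<close>]
    by (intro exI[of _ 0]) (auto simp: dist_commute less_imp_le)
  ultimately have "dist yL L \<le> r"
    by (intro tendsto_upperbound[OF tendsto_dist[OF yL]]) auto
  moreover have "dist L (ys n (l n s)) < r" using small_jumps u L by blast
  moreover have "dist (ys n (l n s)) (y s) < r" using close \<open>s > 0\<close> by simp
  ultimately show ?thesis
    using dist_triangle[of yL "y s" L] dist_triangle[of L "y s" "ys n (l n s)"] by linarith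
qed

lemma J1_conv_continuous_if_jumps_vanish:
  fixes y :: "real \<Rightarrow> 'a::metric_space"
  assumes J: "J1_conv ys y" and "cadlag y" and cadlag_ys: "\<forall>n. cadlag (ys n)"
    and jumps: "\<And>T e. e > 0 \<Longrightarrow> \<forall>\<^sub>F n in sequentially.
                  \<forall>u\<in>{0<..T}. \<forall>L. (ys n \<longlongrightarrow> L) (at_left u) \<longrightarrow> dist L (ys n u) < e"
  shows "continuous_on {0..} y"
proof (rule cadlag_left_continuous_imp_continuous_on[OF \<open>cadlag y\<close>])
  fix s :: real assume "s > 0"
  obtain yL where yL: "(y \<longlongrightarrow> yL) (at_left s)"
    using \<open>cadlag y\<close> \<open>s > 0\<close> unfolding cadlag_def by blast
  have "dist yL (y s) \<le> 0"
  proof (rule field_le_epsilon)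
    fix e :: real assume "e > 0"
    then have "e/3 > 0" by simp
    from J1_conv_jump_le[OF J cadlag_ys \<open>s > 0\<close> this yL jumps[OF this]]
    show "dist yL (y s) \<le> 0 + e" by simp
  qed
  then have "yL = y s" by simp
  with yL show "continuous (at_left s) y" unfolding continuous_within by simp
qed

lemma partition_seq_less:
  assumes "partition_seq t k" "i < j" "j \<le> k n"
  shows "t n i < t n j"
  using assms(2,3)
proof (induction j)
  case (Suc j)
  have "t n j < t n (Suc j)" using assms(1) Suc.prems unfolding partition_seq_def by simp
  then show ?case using Suc by (cases "i = j") auto
qed simp

lemma partition_seq_le_iff:
  assumes "partition_seq t k" "i \<le> k n" "j \<le> k n"
  shows "t n i \<le> t n j \<longleftrightarrow> i \<le> j"
  using partition_seq_less[OF assms(1), of i j n] partition_seq_less[OF assms(1), of j i n] assms(2,3)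
  by (cases i j rule: linorder_cases) auto

lemma partition_seq_nonneg:
  assumes "partition_seq t k" "i \<le> k n"
  shows "0 \<le> t n i"
  using partition_seq_le_iff[OF assms(1) _ assms(2), of 0] assms(1) unfolding partition_seq_def by simp

lemma mesh_on_ge:
  assumes "i < k" "p i \<le> T"
  shows "p (Suc i) - p i \<le> mesh_on p k T"
proof -
  have "{p (Suc i) - p i | i. i < k \<and> p i \<le> T} \<subseteq> (\<lambda>i. p (Suc i) - p i) ` {..<k}"
    by auto
  then have "finite ({p (Suc i) - p i | i. i < k \<and> p i \<le> T} \<union> {0})"
    by (auto intro: finite_subset)
  then show ?thesis
    unfolding mesh_on_def by (rule Max_ge) (use assms in auto)
qed

lemma partition_seq_bracket:
  assumes "partition_seq t k" "s > 0" "s \<le> t n (k n)"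
  obtains i where "i < k n" "t n i < s" "s \<le> t n (Suc i)"
proof -
  let ?S = "{i. i \<le> k n \<and> t n i < s}"
  have fin: "finite ?S" by (rule finite_subset[of _ "{..k n}"]) auto
  have "0 \<in> ?S" using assms unfolding partition_seq_def by auto
  then have i: "Max ?S \<in> ?S" using Max_in[OF fin] by blast
  with assms(3) have "Max ?S < k n" by (metis (mono_tags) le_neq_implies_less mem_Collect_eq not_le)
  moreover have "Suc (Max ?S) \<notin> ?S" using Max_ge[OF fin, of "Suc (Max ?S)"] Suc_n_not_le_n by blast
  ultimately show ?thesis using that i by auto
qed

lemma partition_seq_straddle:
  assumes "partition_seq t k" "s > 0"
  shows "\<forall>\<^sub>F n in sequentially. \<exists>j. Suc j < k n \<and> t n (Suc j) < s \<and> s \<le> t n (Suc (Suc j))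
           \<and> s - 2 * mesh_on (t n) (k n) s \<le> t n j \<and> t n (Suc (Suc j)) \<le> s + mesh_on (t n) (k n) s"
proof -
  have "\<forall>\<^sub>F n in sequentially. s \<le> t n (k n)"
    using assms(1) unfolding partition_seq_def filterlim_at_top by blast
  moreover have "(\<lambda>n. mesh_on (t n) (k n) s) \<longlonglongrightarrow> 0"
    using assms unfolding partition_seq_def by blast
  then have "\<forall>\<^sub>F n in sequentially. mesh_on (t n) (k n) s < s"
    using \<open>s > 0\<close> by (rule order_tendstoD(2))
  ultimately show ?thesis
  proof eventually_elim
    case (elim n)
    let ?m = "mesh_on (t n) (k n) s"
    obtain i where i: "i < k n" "t n i < s" "s \<le> t n (Suc i)"
      using partition_seq_bracket[OF assms elim(1)] .
    have t0: "t n 0 = 0" using assms(1) unfolding partition_seq_def by simp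
    have "i \<noteq> 0"
    proof
      assume "i = 0"
      then have "t n 1 - t n 0 \<le> ?m" using mesh_on_ge[of 0 "k n" "t n" s] i t0 assms(2) by simp
      then show False using elim(2) i \<open>i = 0\<close> t0 by simp
    qed
    then obtain j where j: "i = Suc j" using not0_implies_Suc by blast
    have "t n (Suc (Suc j)) - t n (Suc j) \<le> ?m" using mesh_on_ge[of "Suc j" "k n" "t n" s] i j by simp
    moreover have "t n (Suc j) - t n j \<le> ?m"
      using mesh_on_ge[of j "k n" "t n" s] partition_seq_less[OF assms(1), of j "Suc j" n] i j by simp
    ultimately show ?case using i j by (intro exI[of _ j]) auto
  qed
qed

lemma partition_seq_points_around:
  assumes "partition_seq t k" "s > 0"
  obtains i where "\<forall>\<^sub>F n in sequentially. Suc (i n) < k n"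
    and "filterlim (\<lambda>n. t n (i n)) (at_left s) sequentially"
    and "filterlim (\<lambda>n. t n (Suc (i n))) (at_left s) sequentially"
    and "(\<lambda>n. t n (Suc (Suc (i n)))) \<longlonglongrightarrow> s" "\<forall>\<^sub>F n in sequentially. s \<le> t n (Suc (Suc (i n)))"
proof -
  define m where "m n = mesh_on (t n) (k n) s" for n
  define P where "P n j \<longleftrightarrow> Suc j < k n \<and> t n (Suc j) < s \<and> s \<le> t n (Suc (Suc j))
           \<and> s - 2 * m n \<le> t n j \<and> t n (Suc (Suc j)) \<le> s + m n" for n j
  define i where "i n = (SOME j. P n j)" for n
  have "\<forall>\<^sub>F n in sequentially. P n (i n)"
    using partition_seq_straddle[OF assms] unfolding i_def P_def m_def
    by (rule eventually_mono) (rule someI_ex)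
  then have around: "\<forall>\<^sub>F n in sequentially. Suc (i n) < k n \<and> s - 2 * m n \<le> t n (i n)
      \<and> t n (i n) < t n (Suc (i n)) \<and> t n (Suc (i n)) < s
      \<and> s \<le> t n (Suc (Suc (i n))) \<and> t n (Suc (Suc (i n))) \<le> s + m n"
    by (rule eventually_mono) (use partition_seq_less[OF assms(1)] in \<open>simp add: P_def\<close>)
  have "m \<longlonglongrightarrow> 0" using assms unfolding partition_seq_def m_def by blast
  then have lo: "(\<lambda>n. s - 2 * m n) \<longlonglongrightarrow> s" and hi: "(\<lambda>n. s + m n) \<longlonglongrightarrow> s"
    using tendsto_diff[OF tendsto_const tendsto_mult[OF tendsto_const], of m 0 sequentially s 2]
      tendsto_add[OF tendsto_const, of m 0 sequentially s] by simp_all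
  have lim: "(\<lambda>n. t n (i n)) \<longlonglongrightarrow> s" "(\<lambda>n. t n (Suc (i n))) \<longlonglongrightarrow> s"
    by (rule tendsto_sandwich[OF _ _ lo tendsto_const]; use around in \<open>auto elim: eventually_mono\<close>)+
  show ?thesis
  proof (rule that)
    show "\<forall>\<^sub>F n in sequentially. Suc (i n) < k n" "\<forall>\<^sub>F n in sequentially. s \<le> t n (Suc (Suc (i n)))"
      using around by (auto elim: eventually_mono)
    show "filterlim (\<lambda>n. t n (i n)) (at_left s) sequentially"
      "filterlim (\<lambda>n. t n (Suc (i n))) (at_left s) sequentially"
      using lim around unfolding filterlim_at by (auto elim: eventually_mono)
    show "(\<lambda>n. t n (Suc (Suc (i n)))) \<longlonglongrightarrow> s"
      by (rule tendsto_sandwich[OF _ _ tendsto_const hi]) (use around in \<open>auto elim: eventually_mono\<close>)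
  qed
qed

lemma norm_outer_self: "norm (outer v v) = (norm v)\<^sup>2"
proof -
  have row: "outer v v $ i = v $ i *\<^sub>R v" for i
    by (simp add: outer_def vec_eq_iff)
  have "(norm (outer v v))\<^sup>2 = (\<Sum>i\<in>UNIV. (v $ i)\<^sup>2 * (norm v)\<^sup>2)"
    by (simp add: norm_vec_def L2_set_def row sum_nonneg power_mult_distrib sum_distrib_left)
  also have "\<dots> = ((norm v)\<^sup>2)\<^sup>2"
    by (simp add: norm_vec_def L2_set_def sum_nonneg sum_distrib_right[symmetric] power2_eq_square)
  finally show ?thesis by (rule power2_eq_imp_eq) auto
qed

lemma qv_n_eq: "qv_n t k x n = (\<lambda>s. \<Sum>i\<in>{i\<in>{..<k n}. t n i \<le> s}.
    outer (x (t n (Suc i)) - x (t n i)) (x (t n (Suc i)) - x (t n i)))"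
  unfolding qv_n_def by (simp add: conj_commute)

lemma cadlag_qv_n: "cadlag (qv_n t k x n)"
  unfolding qv_n_eq by (rule cadlag_sum_le) simp

lemma qv_n_tendsto_at_left:
  "(qv_n t k x n \<longlongrightarrow> (\<Sum>i\<in>{i\<in>{..<k n}. t n i < u}.
      outer (x (t n (Suc i)) - x (t n i)) (x (t n (Suc i)) - x (t n i)))) (at_left u)"
  unfolding qv_n_eq by (rule tendsto_at_left_sum_le) simp

lemma qv_n_at_partition_point:
  assumes "partition_seq t k" "i < k n"
  shows "qv_n t k x n (t n i) = (\<Sum>j\<le>i. outer (x (t n (Suc j)) - x (t n j)) (x (t n (Suc j)) - x (t n j)))"
proof -
  have "{j. j < k n \<and> t n j \<le> t n i} = {..i}"
    using partition_seq_le_iff[OF assms(1), of _ n i] assms(2) by auto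
  then show ?thesis unfolding qv_n_def by simp
qed

lemma qv_n_increment:
  assumes "partition_seq t k" "Suc i < k n"
  shows "qv_n t k x n (t n (Suc i)) - qv_n t k x n (t n i)
       = outer (x (t n (Suc (Suc i))) - x (t n (Suc i))) (x (t n (Suc (Suc i))) - x (t n (Suc i)))"
  using assms by (simp add: qv_n_at_partition_point)

lemma qv_n_jump_less:
  assumes "partition_seq t k" "e > 0"
    and small: "\<forall>i<k n. t n i \<le> T \<longrightarrow> norm (x (t n (Suc i)) - x (t n i)) < e" and "u \<le> T"
    and L: "(qv_n t k x n \<longlongrightarrow> L) (at_left u)"
  shows "dist L (qv_n t k x n u) < e\<^sup>2"
proof -
  let ?d = "\<lambda>i. outer (x (t n (Suc i)) - x (t n i)) (x (t n (Suc i)) - x (t n i))"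
  let ?B = "{i\<in>{..<k n}. t n i < u}" and ?E = "{i\<in>{..<k n}. t n i = u}"
  have L_eq: "L = sum ?d ?B"
    using tendsto_unique[OF trivial_limit_at_left_real L qv_n_tendsto_at_left] .
  have "{i\<in>{..<k n}. t n i \<le> u} = ?B \<union> ?E" by auto
  then have "qv_n t k x n u = sum ?d (?B \<union> ?E)" by (simp only: qv_n_eq)
  also have "\<dots> = sum ?d ?B + sum ?d ?E" by (rule sum.union_disjoint) auto
  finally have "dist L (qv_n t k x n u) = norm (sum ?d ?E)"
    using L_eq by (simp add: dist_norm)
  also have "\<dots> < e\<^sup>2"
  proof (cases "?E = {}")
    case True
    show ?thesis unfolding True using \<open>e > 0\<close> by simp
  next
    case False
    then obtain i where i: "i \<in> ?E" by blast
    have "j = i" if "j \<in> ?E" for j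
      using that i partition_seq_le_iff[OF assms(1), of j n i] partition_seq_le_iff[OF assms(1), of i n j]
      by simp
    then have "?E = {i}" using i by blast
    moreover have "norm (x (t n (Suc i)) - x (t n i)) < e" using small i \<open>u \<le> T\<close> by auto
    ultimately show ?thesis by (simp add: norm_outer_self power_strict_mono)
  qed
  finally show ?thesis .
qed

lemma partition_increments_small:
  fixes x :: "real \<Rightarrow> 'a::real_normed_vector"
  assumes "partition_seq t k" "continuous_on {0..} x" "e > 0"
  shows "\<forall>\<^sub>F n in sequentially. \<forall>i<k n. t n i \<le> T \<longrightarrow> norm (x (t n (Suc i)) - x (t n i)) < e"
proof -
  define R where "R = max T 0 + 1"
  have "uniformly_continuous_on {0..R} x"
    by (rule compact_uniformly_continuous[OF continuous_on_subset[OF assms(2)]]) auto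
  then obtain d where "d > 0"
    and d: "\<And>u v. u \<in> {0..R} \<Longrightarrow> v \<in> {0..R} \<Longrightarrow> dist v u < d \<Longrightarrow> dist (x v) (x u) < e"
    unfolding uniformly_continuous_on_def using assms(3) by metis
  have "(\<lambda>n. mesh_on (t n) (k n) R) \<longlonglongrightarrow> 0"
    using assms(1) unfolding partition_seq_def R_def by simp
  moreover have "0 < min d 1" using \<open>d > 0\<close> by simp
  ultimately have "\<forall>\<^sub>F n in sequentially. mesh_on (t n) (k n) R < min d 1"
    by (rule order_tendstoD(2))
  then show ?thesis
  proof (rule eventually_mono, intro allI impI)
    fix n i assume mesh: "mesh_on (t n) (k n) R < min d 1" and i: "i < k n" "t n i \<le> T"
    have "t n i \<le> R" using i(2) max.cobounded1[of T 0] unfolding R_def by linarith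
    then have "t n (Suc i) - t n i < min d 1"
      using mesh_on_ge[of i "k n" "t n" R] mesh i(1) by linarith
    moreover have "0 \<le> t n i" using partition_seq_nonneg[OF assms(1), of i n] i by simp
    moreover have "t n i < t n (Suc i)" using assms(1) i unfolding partition_seq_def by blast
    ultimately have "dist (x (t n (Suc i))) (x (t n i)) < e"
      using i by (intro d) (auto simp: dist_real_def R_def)
    then show "norm (x (t n (Suc i)) - x (t n i)) < e" by (simp add: dist_norm)
  qed
qed

lemma qv_n_jumps_vanish:
  assumes "partition_seq t k" "continuous_on {0..} x" "e > 0"
  shows "\<forall>\<^sub>F n in sequentially.
           \<forall>u\<in>{0<..T}. \<forall>L. (qv_n t k x n \<longlongrightarrow> L) (at_left u) \<longrightarrow> dist L (qv_n t k x n u) < e"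
  using partition_increments_small[OF assms(1,2) real_sqrt_gt_zero[OF assms(3)], of T]
proof (rule eventually_mono, intro ballI allI impI)
  fix n u L
  assume "\<forall>i<k n. t n i \<le> T \<longrightarrow> norm (x (t n (Suc i)) - x (t n i)) < sqrt e"
    and "u \<in> {0<..T}" and "(qv_n t k x n \<longlongrightarrow> L) (at_left u)"
  then show "dist L (qv_n t k x n u) < e"
    using qv_n_jump_less[OF assms(1), of "sqrt e" n T x u L] \<open>e > 0\<close> by simp
qed

lemma qv_n_uniform_limit_imp_continuous:
  fixes x :: "real \<Rightarrow> real^'m"
  assumes ps: "partition_seq t k" and "cadlag x" and "cadlag Q"
    and U: "\<forall>T\<ge>0. uniform_limit {0..T} (qv_n t k x) Q sequentially"
  shows "continuous_on {0..} x"
proof (rule cadlag_left_continuous_imp_continuous_on[OF \<open>cadlag x\<close>])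
  fix s :: real assume "s > 0"
  obtain xL where xL: "(x \<longlongrightarrow> xL) (at_left s)"
    using \<open>cadlag x\<close> \<open>s > 0\<close> unfolding cadlag_def by blast
  obtain QL where QL: "(Q \<longlongrightarrow> QL) (at_left s)"
    using \<open>cadlag Q\<close> \<open>s > 0\<close> unfolding cadlag_def by blast
  obtain i where idx: "\<forall>\<^sub>F n in sequentially. Suc (i n) < k n"
    and left: "filterlim (\<lambda>n. t n (i n)) (at_left s) sequentially"
      "filterlim (\<lambda>n. t n (Suc (i n))) (at_left s) sequentially"
    and right: "(\<lambda>n. t n (Suc (Suc (i n)))) \<longlonglongrightarrow> s" "\<forall>\<^sub>F n in sequentially. s \<le> t n (Suc (Suc (i n)))"
    using partition_seq_points_around[OF ps \<open>s > 0\<close>] by blast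
  have qv_lim: "(\<lambda>n. qv_n t k x n (a n)) \<longlonglongrightarrow> QL" if a: "filterlim a (at_left s) sequentially" for a
  proof (rule uniform_limit_tendsto_compose[OF U[rule_format, of s]])
    have "\<forall>\<^sub>F n in sequentially. 0 < a n" "\<forall>\<^sub>F n in sequentially. a n < s"
      using a \<open>s > 0\<close> unfolding filterlim_at by (auto elim: order_tendstoD eventually_mono)
    then show "\<forall>\<^sub>F n in sequentially. a n \<in> {0..s}" by eventually_elim simp
  qed (use \<open>s > 0\<close> filterlim_compose[OF QL a] in auto)
  have "(\<lambda>n. norm (qv_n t k x n (t n (Suc (i n))) - qv_n t k x n (t n (i n)))) \<longlonglongrightarrow> norm (QL - QL)"
    by (intro tendsto_intros qv_lim left)
  moreover have "\<forall>\<^sub>F n in sequentially.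
      norm (qv_n t k x n (t n (Suc (i n))) - qv_n t k x n (t n (i n)))
      = (norm (x (t n (Suc (Suc (i n)))) - x (t n (Suc (i n)))))\<^sup>2"
    using idx by (rule eventually_mono) (simp add: qv_n_increment[OF ps] norm_outer_self)
  ultimately have "(\<lambda>n. (norm (x (t n (Suc (Suc (i n)))) - x (t n (Suc (i n)))))\<^sup>2) \<longlonglongrightarrow> 0"
    by (simp add: tendsto_cong)
  moreover have "(\<lambda>n. x (t n (Suc (Suc (i n))))) \<longlonglongrightarrow> x s"
  proof (rule continuous_within_tendsto_compose[where f = x and S = "{s..}"])
    show "continuous (at s within {s..}) x"
      using \<open>cadlag x\<close> \<open>s > 0\<close> unfolding cadlag_def by (simp add: at_within_Ici_at_right)
  qed (use right in auto)
  then have "(\<lambda>n. (norm (x (t n (Suc (Suc (i n)))) - x (t n (Suc (i n)))))\<^sup>2) \<longlonglongrightarrow> (norm (x s - xL))\<^sup>2"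
    by (intro tendsto_intros filterlim_compose[OF xL left(2)])
  ultimately have "xL = x s" using LIMSEQ_unique by fastforce
  with xL show "continuous (at_left s) x" unfolding continuous_within by simp
qed

theorem corollary3p7:
  fixes t :: "nat \<Rightarrow> nat \<Rightarrow> real" and k :: "nat \<Rightarrow> nat"
    and x :: "real \<Rightarrow> real^'m" and Q :: "real \<Rightarrow> real^'m^'m"
  assumes "partition_seq t k"
    and "cadlag x"
    and "cadlag Q"
    and "J1_conv (qv_n t k x) Q"
  shows "((\<forall>T\<ge>0. uniform_limit {0..T} (qv_n t k x) Q sequentially) \<longleftrightarrow> continuous_on {0..} x)
    \<and> (\<forall>F. J1_continuous_at F Q \<longrightarrow> (\<lambda>n. F (qv_n t k x n)) \<longlonglongrightarrow> F Q)"
proof -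
  have "continuous_on {0..} Q" if "continuous_on {0..} x"
    using J1_conv_continuous_if_jumps_vanish[OF assms(4,3)] cadlag_qv_n
      qv_n_jumps_vanish[OF assms(1) that] by blast
  then show ?thesis
    using qv_n_uniform_limit_imp_continuous[OF assms(1-3)] J1_conv_continuous_imp_uniform_limit[OF assms(4)]
      J1_conv_tendsto_functional[OF _ assms(4)] cadlag_qv_n by blast
qed

end
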